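(* Let $\mathcal A\in\mathbb C^{n\times n}$ be nonsingular and suppose $\mathcal A=\mathcal P_1+\mathcal P_2$ with $\mathcal P_1,\mathcal P_2$ positive semidefinite, and let $\Sigma$ be Hermitian positive definite. Let $\tilde{\mathcal A}=\Sigma^{-1/2}\mathcal A\Sigma^{-1/2}$, $\tilde{\mathcal P}_i=\Sigma^{-1/2}\mathcal P_i\Sigma^{-1/2}$ ($i=1,2$), and $K=\tilde{\mathcal A}+\tilde{\mathcal P}_1^*\tilde{\mathcal P}_2^*\tilde{\mathcal A}$. If $K$ is positive definite, then the PPS method is convergent, i.e. $\rho(\Gamma_{\mathrm{PPS}})<1$, where $\Gamma_{\mathrm{PPS}}=(\Sigma+\mathcal P_1)^{-1}(\Sigma-\mathcal P_2)(\Sigma+\mathcal P_2)^{-1}(\Sigma-\mathcal P_1)$.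
   Context: A matrix $\mathcal P\in\mathbb C^{n\times n}$ is called positive semidefinite if $\mathcal P+\mathcal P^*$ is Hermitian positive semidefinite, and positive definite if $\mathcal P+\mathcal P^*$ is Hermitian positive definite; $\mathcal P$ need not be Hermitian. $\rho(\cdot)$ is the spectral radius; $\Sigma^{1/2}$ is the HPD square root of the HPD matrix $\Sigma$. The PPS method is the iteration $(\Sigma+\mathcal P_2)u^{k+1/2}=(\Sigma-\mathcal P_1)u^k+b$, $(\Sigma+\mathcal P_1)u^{k+1}=(\Sigma-\mathcal P_2)u^{k+1/2}+b$ for solving $\mathcal A u=b$; its iteration matrix is $\Gamma_{\mathrm{PPS}}$, and it converges for every initial guess iff $\rho(\Gamma_{\mathrm{PPS}})<1$. *)

theory Defs
  imports "Jordan_Normal_Form.Spectral_Radius" "Jordan_Normal_Form.Schur_Decomposition"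
begin

abbreviation adj :: "complex mat \<Rightarrow> complex mat" where
  "adj A \<equiv> mat_adjoint A"

(* Hermitian positive (semi)definite n x n matrices; x^* H x = (H x) \<bullet>c x *)
definition hpd :: "nat \<Rightarrow> complex mat \<Rightarrow> bool" where
  "hpd n H \<longleftrightarrow> H \<in> carrier_mat n n \<and> mat_adjoint H = H \<and>
     (\<forall>x \<in> carrier_vec n. x \<noteq> 0\<^sub>v n \<longrightarrow> 0 < Re ((H *\<^sub>v x) \<bullet>c x))"

definition hpsd :: "nat \<Rightarrow> complex mat \<Rightarrow> bool" where
  "hpsd n H \<longleftrightarrow> H \<in> carrier_mat n n \<and> mat_adjoint H = H \<and>
     (\<forall>x \<in> carrier_vec n. 0 \<le> Re ((H *\<^sub>v x) \<bullet>c x))"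

(* the paper's (possibly non-Hermitian) notions: P + P^* is HPSD / HPD *)
definition pos_semidef :: "nat \<Rightarrow> complex mat \<Rightarrow> bool" where
  "pos_semidef n P \<longleftrightarrow> P \<in> carrier_mat n n \<and> hpsd n (P + mat_adjoint P)"

definition pos_def :: "nat \<Rightarrow> complex mat \<Rightarrow> bool" where
  "pos_def n P \<longleftrightarrow> P \<in> carrier_mat n n \<and> hpd n (P + mat_adjoint P)"

definition minv :: "complex mat \<Rightarrow> complex mat" where
  "minv A = (THE B. B \<in> carrier_mat (dim_row A) (dim_row A) \<and>
                    A * B = 1\<^sub>m (dim_row A) \<and> B * A = 1\<^sub>m (dim_row A))"

definition hpd_sqrt :: "complex mat \<Rightarrow> complex mat" where
  "hpd_sqrt S = (THE R. hpd (dim_row S) R \<and> R * R = S)"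

definition inv_sqrt :: "complex mat \<Rightarrow> complex mat" where
  "inv_sqrt S = minv (hpd_sqrt S)"

definition Gamma_PPS :: "complex mat \<Rightarrow> complex mat \<Rightarrow> complex mat \<Rightarrow> complex mat" where
  "Gamma_PPS \<Sigma> P1 P2 = minv (\<Sigma> + P1) * (\<Sigma> - P2) * minv (\<Sigma> + P2) * (\<Sigma> - P1)"

end

theory Submission
  imports Defs
begin

text \<open>
  Let \<open>R\<close> be the HPD square root of \<open>\<Sigma>\<close>, \<open>S = R\<^sup>-\<^sup>1\<close> and \<open>Q\<^sub>i = S P\<^sub>i S\<close>. Because
  \<open>(\<Sigma> - Y) \<Sigma>\<^sup>-\<^sup>1 (\<Sigma> + Y) = \<Sigma> - Y \<Sigma>\<^sup>-\<^sup>1 Y = (\<Sigma> + Y) \<Sigma>\<^sup>-\<^sup>1 (\<Sigma> - Y)\<close>, an eigenpair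
  \<open>\<Gamma> v = \<mu> v\<close> of the PPS iteration matrix gives, for \<open>x = R v \<noteq> 0\<close>,
  \<open>(I - Q\<^sub>2) (I - Q\<^sub>1) x = \<mu> (I + Q\<^sub>2) (I + Q\<^sub>1) x\<close>. With \<open>y = (Q\<^sub>1 + Q\<^sub>2) x\<close> and
  \<open>z = x + Q\<^sub>2 Q\<^sub>1 x\<close> this reads \<open>z - y = \<mu> (z + y)\<close>, and \<open>\<langle>K x, x\<rangle> = \<langle>y, z\<rangle>\<close>. Hence
  \<open>(1 - |\<mu>|\<^sup>2) |z + y|\<^sup>2 = |z + y|\<^sup>2 - |z - y|\<^sup>2 = 4 Re \<langle>y, z\<rangle> > 0\<close>.
  The square root comes from the spectral theorem for Hermitian matrices. Semidefiniteness
  of \<open>P\<^sub>i\<close> only serves to make \<open>\<Sigma> + P\<^sub>i\<close> invertible.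
\<close>

section \<open>Adjoints and the complex inner product\<close>

lemma adj_dim[simp]: "dim_row (adj A) = dim_col A" "dim_col (adj A) = dim_row A"
  unfolding mat_adjoint_def by auto

lemma adj_index[simp]: "i < dim_col A \<Longrightarrow> j < dim_row A \<Longrightarrow> adj A $$ (i,j) = cnj (A $$ (j,i))"
  unfolding mat_adjoint_def by (simp add: mat_of_rows_index)

lemma adj_carrier_mat[simp]: "A \<in> carrier_mat n m \<Longrightarrow> adj A \<in> carrier_mat m n"
  unfolding carrier_mat_def by simp

lemma adj_adj[simp]: "adj (adj A) = A"
  by (rule eq_matI) auto

lemma adj_one[simp]: "adj (1\<^sub>m n) = 1\<^sub>m n"
  by (rule eq_matI) auto

lemma adj_add: "A \<in> carrier_mat n m \<Longrightarrow> B \<in> carrier_mat n m \<Longrightarrow> adj (A + B) = adj A + adj B"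
  by (rule eq_matI) auto

lemma adj_minus: "A \<in> carrier_mat n m \<Longrightarrow> B \<in> carrier_mat n m \<Longrightarrow> adj (A - B) = adj A - adj B"
  by (rule eq_matI) auto

lemma adj_mult:
  assumes "A \<in> carrier_mat n m" "B \<in> carrier_mat m k"
  shows "adj (A * B) = adj B * adj A"
  by (rule eq_matI) (use assms in \<open>auto simp: scalar_prod_def sum_conjugate mult.commute\<close>)

lemma cscalar_add_left:
  fixes u v w :: "complex vec"
  shows "u \<in> carrier_vec n \<Longrightarrow> v \<in> carrier_vec n \<Longrightarrow> w \<in> carrier_vec n \<Longrightarrow> (u + v) \<bullet>c w = u \<bullet>c w + v \<bullet>c w"
  by (simp add: scalar_prod_def sum.distrib algebra_simps)

lemma cscalar_add_right:
  fixes u v w :: "complex vec"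
  shows "u \<in> carrier_vec n \<Longrightarrow> v \<in> carrier_vec n \<Longrightarrow> w \<in> carrier_vec n \<Longrightarrow> u \<bullet>c (v + w) = u \<bullet>c v + u \<bullet>c w"
  by (simp add: scalar_prod_def sum.distrib algebra_simps)

lemma cscalar_smult_left:
  fixes v w :: "complex vec"
  shows "v \<in> carrier_vec n \<Longrightarrow> w \<in> carrier_vec n \<Longrightarrow> (a \<cdot>\<^sub>v v) \<bullet>c w = a * (v \<bullet>c w)"
  by (simp add: scalar_prod_def sum_distrib_left mult_ac)

lemma cscalar_smult_right:
  fixes v w :: "complex vec"
  shows "v \<in> carrier_vec n \<Longrightarrow> w \<in> carrier_vec n \<Longrightarrow> v \<bullet>c (b \<cdot>\<^sub>v w) = cnj b * (v \<bullet>c w)"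
  by (simp add: scalar_prod_def sum_distrib_left mult_ac)

lemma cscalar_commute:
  fixes v w :: "complex vec"
  shows "v \<in> carrier_vec n \<Longrightarrow> w \<in> carrier_vec n \<Longrightarrow> v \<bullet>c w = cnj (w \<bullet>c v)"
  by (simp add: scalar_prod_def sum_conjugate mult.commute)

lemma cscalar_self_real:
  fixes v :: "complex vec"
  shows "v \<bullet>c v = complex_of_real (Re (v \<bullet>c v))"
  using conjugate_square_ge_0_vec[of v] by (simp add: complex_eq_iff less_eq_complex_def)

lemma cscalar_self_Re_pos:
  fixes v :: "complex vec"
  shows "v \<in> carrier_vec n \<Longrightarrow> v \<noteq> 0\<^sub>v n \<Longrightarrow> 0 < Re (v \<bullet>c v)"
  using conjugate_square_greater_0_vec[of v n] by (simp add: less_complex_def)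

lemma cscalar_adj:
  fixes A :: "complex mat"
  assumes A: "A \<in> carrier_mat n m" and x: "x \<in> carrier_vec m" and y: "y \<in> carrier_vec n"
  shows "(A *\<^sub>v x) \<bullet>c y = x \<bullet>c (adj A *\<^sub>v y)"
proof -
  have "(A *\<^sub>v x) \<bullet>c y = (\<Sum>i<n. (\<Sum>j<m. A $$ (i,j) * x $ j) * cnj (y $ i))"
    using A x y by (simp add: scalar_prod_def mult_mat_vec_def row_def lessThan_atLeast0)
  also have "\<dots> = (\<Sum>i<n. \<Sum>j<m. A $$ (i,j) * x $ j * cnj (y $ i))"
    by (simp add: sum_distrib_right)
  also have "\<dots> = (\<Sum>j<m. \<Sum>i<n. A $$ (i,j) * x $ j * cnj (y $ i))"
    by (rule sum.swap)
  also have "\<dots> = (\<Sum>j<m. x $ j * cnj (\<Sum>i<n. cnj (A $$ (i,j)) * y $ i))"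
    by (simp add: sum_distrib_left mult_ac)
  also have "\<dots> = x \<bullet>c (adj A *\<^sub>v y)"
    using A x y by (simp add: scalar_prod_def mult_mat_vec_def row_def lessThan_atLeast0)
  finally show ?thesis .
qed

lemma Re_quad_form_herm_part:
  assumes M: "M \<in> carrier_mat n n" and v: "v \<in> carrier_vec n"
  shows "Re (((M + adj M) *\<^sub>v v) \<bullet>c v) = 2 * Re ((M *\<^sub>v v) \<bullet>c v)"
proof -
  have "((M + adj M) *\<^sub>v v) \<bullet>c v = (M *\<^sub>v v) \<bullet>c v + (adj M *\<^sub>v v) \<bullet>c v"
    unfolding add_mult_distrib_mat_vec[OF M adj_carrier_mat[OF M] v]
    by (rule cscalar_add_left[OF mult_mat_vec_carrier[OF M v] mult_mat_vec_carrier[OF adj_carrier_mat[OF M] v] v])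
  also have "(adj M *\<^sub>v v) \<bullet>c v = v \<bullet>c (M *\<^sub>v v)"
    using cscalar_adj[OF adj_carrier_mat[OF M] v v] by simp
  also have "v \<bullet>c (M *\<^sub>v v) = cnj ((M *\<^sub>v v) \<bullet>c v)"
    using M v by (intro cscalar_commute[of v n]) auto
  finally show ?thesis by simp
qed

lemma hermitian_quad_form_real:
  assumes M: "M \<in> carrier_mat n n" "adj M = M" and v: "v \<in> carrier_vec n"
  shows "cnj ((M *\<^sub>v v) \<bullet>c v) = (M *\<^sub>v v) \<bullet>c v"
proof -
  have "(M *\<^sub>v v) \<bullet>c v = v \<bullet>c (M *\<^sub>v v)"
    using cscalar_adj[OF M(1) v v] M(2) by simp
  also have "\<dots> = cnj ((M *\<^sub>v v) \<bullet>c v)"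
    using M v by (intro cscalar_commute[of v n]) auto
  finally show ?thesis by simp
qed

lemma mult_mat_vec_right_inverse:
  fixes A B :: "complex mat"
  assumes "A \<in> carrier_mat n n" "B \<in> carrier_mat n n" "A * B = 1\<^sub>m n" "w \<in> carrier_vec n"
  shows "A *\<^sub>v (B *\<^sub>v w) = w"
  using assoc_mult_mat_vec[OF assms(1,2,4)] assms(3,4) by simp

section \<open>Unitary diagonalization of Hermitian matrices\<close>

definition unitary :: "nat \<Rightarrow> complex mat \<Rightarrow> bool" where
  "unitary n U \<longleftrightarrow> U \<in> carrier_mat n n \<and> adj U * U = 1\<^sub>m n \<and> U * adj U = 1\<^sub>m n"

lemma unitaryI:
  assumes U: "U \<in> carrier_mat n n" and "adj U * U = 1\<^sub>m n"
  shows "unitary n U"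
  using assms mat_mult_left_right_inverse[OF adj_carrier_mat[OF U] U] unfolding unitary_def by auto

lemma unitary_carrier_mat: "unitary n U \<Longrightarrow> U \<in> carrier_mat n n"
  unfolding unitary_def by simp

lemma unitary_one: "unitary n (1\<^sub>m n)"
  unfolding unitary_def by simp

lemma unitary_mult:
  assumes U: "unitary n U" and V: "unitary n V"
  shows "unitary n (U * V)"
proof (rule unitaryI)
  have Uc: "U \<in> carrier_mat n n" and Vc: "V \<in> carrier_mat n n"
    using U V by (auto simp: unitary_def)
  then show "U * V \<in> carrier_mat n n" by simp
  have aUc: "adj U \<in> carrier_mat n n" and aVc: "adj V \<in> carrier_mat n n"
    using Uc Vc by auto
  have "adj (U * V) * (U * V) = adj V * ((adj U * U) * V)"
    by (simp add: adj_mult[OF Uc Vc] assoc_mult_mat[OF aVc aUc mult_carrier_mat[OF Uc Vc]]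
        assoc_mult_mat[OF aUc Uc Vc])
  also have "\<dots> = 1\<^sub>m n"
    using U V Vc by (simp add: unitary_def)
  finally show "adj (U * V) * (U * V) = 1\<^sub>m n" .
qed

lemma adj_mult_mult_index:
  assumes U: "U \<in> carrier_mat n k" and M: "M \<in> carrier_mat n m" and V: "V \<in> carrier_mat m l"
    and i: "i < k" and j: "j < l"
  shows "(adj U * M * V) $$ (i,j) = (M *\<^sub>v col V j) \<bullet>c col U i"
proof -
  have "(adj U * M * V) $$ (i,j) = row (adj U) i \<bullet> col (M * V) j"
    using U M V i j by (simp add: assoc_mult_mat[of _ k n _ m _ l])
  also have "row (adj U) i = conjugate (col U i)"
    using U i by (intro eq_vecI) auto
  also have "col (M * V) j = M *\<^sub>v col V j"
    by (rule col_mult2[OF M V j])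
  also have "conjugate (col U i) \<bullet> (M *\<^sub>v col V j) = (M *\<^sub>v col V j) \<bullet>c col U i"
    using U M V i j by (intro comm_scalar_prod[of _ n]) auto
  finally show ?thesis .
qed

lemma unitary_cols_orthonormal:
  assumes "unitary n U" "i < n" "j < n"
  shows "col U j \<bullet>c col U i = (if i = j then 1 else 0)"
proof -
  have U: "U \<in> carrier_mat n n" using assms(1) by (rule unitary_carrier_mat)
  have "col U j \<bullet>c col U i = (adj U * 1\<^sub>m n * U) $$ (i,j)"
    using adj_mult_mult_index[OF U one_carrier_mat U assms(2,3)] U assms(3) by simp
  also have "adj U * 1\<^sub>m n * U = 1\<^sub>m n"
    using assms(1) U by (simp add: unitary_def)
  finally show ?thesis using assms(2,3) by simp
qed

lemma unitary_mat_of_cols: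
  assumes len: "length ws = n" and carr: "set ws \<subseteq> carrier_vec n"
    and orthonormal: "\<And>i j. i < n \<Longrightarrow> j < n \<Longrightarrow> ws ! j \<bullet>c ws ! i = (if i = j then 1 else 0)"
  shows "unitary n (mat_of_cols n ws)"
proof (rule unitaryI)
  let ?W = "mat_of_cols n ws"
  show W: "?W \<in> carrier_mat n n" using mat_of_cols_carrier(1)[of n ws] len by simp
  have "(adj ?W * ?W) $$ (i,j) = 1\<^sub>m n $$ (i,j)" if i: "i < n" and j: "j < n" for i j
  proof -
    have "(adj ?W * ?W) $$ (i,j) = (adj ?W * 1\<^sub>m n * ?W) $$ (i,j)"
      using W by simp
    also have "\<dots> = ws ! j \<bullet>c ws ! i"
      unfolding adj_mult_mult_index[OF W one_carrier_mat W i j]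
      using i j len carr by (simp add: col_mat_of_cols subset_code(1))
    finally show ?thesis using orthonormal[OF i j] i j by simp
  qed
  then show "adj ?W * ?W = 1\<^sub>m n"
    using W by (intro eq_matI) auto
qed

definition vec_normalize :: "complex vec \<Rightarrow> complex vec" where
  "vec_normalize v = complex_of_real (1 / sqrt (Re (v \<bullet>c v))) \<cdot>\<^sub>v v"

lemma vec_normalize:
  assumes v: "v \<in> carrier_vec n" "v \<noteq> 0\<^sub>v n"
  shows "vec_normalize v \<in> carrier_vec n" "vec_normalize v \<bullet>c vec_normalize v = 1"
proof -
  show "vec_normalize v \<in> carrier_vec n" using v unfolding vec_normalize_def by simp
  define r where "r = Re (v \<bullet>c v)"
  have r: "0 < r" unfolding r_def by (rule cscalar_self_Re_pos[OF v])
  define c where "c = complex_of_real (1 / sqrt r)"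
  have "vec_normalize v \<bullet>c vec_normalize v = c * cnj c * (v \<bullet>c v)"
    unfolding vec_normalize_def c_def r_def
    using v(1) by (simp add: cscalar_smult_left[of _ n] cscalar_smult_right[of _ n])
  also have "v \<bullet>c v = complex_of_real r" unfolding r_def by (rule cscalar_self_real)
  also have "c * cnj c * complex_of_real r = complex_of_real (1 / sqrt r * (1 / sqrt r) * r)"
    by (simp only: c_def complex_cnj_complex_of_real of_real_mult)
  also have "1 / sqrt r * (1 / sqrt r) * r = 1" using r by (simp add: field_simps)
  finally show "vec_normalize v \<bullet>c vec_normalize v = 1" by simp
qed

lemma vec_normalize_unit: "v \<bullet>c v = 1 \<Longrightarrow> vec_normalize v = v"
  unfolding vec_normalize_def by simp

lemma corthogonal_basis_with_head:
  fixes v :: "complex vec"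
  assumes v: "v \<in> carrier_vec n" "v \<noteq> 0\<^sub>v n"
  shows "\<exists>ws. set ws \<subseteq> carrier_vec n \<and> corthogonal ws \<and> length ws = n \<and> hd ws = v"
proof -
  interpret cof_vec_space n "TYPE(complex)" .
  define b where "b = basis_completion v"
  from basis_completion[OF v, folded b_def]
  have dist: "distinct b" and indep: "\<not> lin_dep (set b)" and b: "set b \<subseteq> carrier_vec n"
    and hd_b: "hd b = v" and len_b: "length b = n" by auto
  have "n \<noteq> 0" using v by auto
  with hd_b len_b obtain vs where bv: "b = v # vs" by (cases b) auto
  define ws where "ws = gram_schmidt n b"
  from gram_schmidt_result[OF b dist indep refl, folded ws_def]
  have "set ws \<subseteq> carrier_vec n" "corthogonal ws" "length ws = n"
    by (auto simp: len_b)
  moreover have "hd ws = v" using gram_schmidt_hd[OF v(1), of vs] unfolding ws_def bv .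
  ultimately show ?thesis by blast
qed

lemma unitary_with_first_col:
  assumes v: "v \<in> carrier_vec n" and v1: "v \<bullet>c v = 1"
  shows "\<exists>W. unitary n W \<and> col W 0 = v"
proof -
  have v0: "v \<noteq> 0\<^sub>v n" using v1 v by auto
  then have "n \<noteq> 0" using v by auto
  obtain ws0 where ws0: "set ws0 \<subseteq> carrier_vec n" "corthogonal ws0" and len0: "length ws0 = n"
    and hd0: "hd ws0 = v"
    using corthogonal_basis_with_head[OF v v0] by blast
  have ws0i: "ws0 ! i \<in> carrier_vec n" "ws0 ! i \<noteq> 0\<^sub>v n" if "i < n" for i
  proof -
    show c: "ws0 ! i \<in> carrier_vec n" using ws0 len0 that by auto
    have "ws0 ! i \<bullet>c ws0 ! i \<noteq> 0" using corthogonalD[OF ws0(2), of i i] len0 that by auto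
    then show "ws0 ! i \<noteq> 0\<^sub>v n" using c by auto
  qed
  define ws where "ws = map vec_normalize ws0"
  have len: "length ws = n" using len0 ws_def by simp
  have wsi: "ws ! i = vec_normalize (ws0 ! i)" if "i < n" for i
    using that len0 unfolding ws_def by simp
  have carr: "set ws \<subseteq> carrier_vec n"
    using vec_normalize(1)[OF ws0i] len wsi by (auto simp: in_set_conv_nth)
  have orthonormal: "ws ! j \<bullet>c ws ! i = (if i = j then 1 else 0)" if i: "i < n" and j: "j < n" for i j
  proof (cases "i = j")
    case True
    then show ?thesis using vec_normalize(2)[OF ws0i[OF i]] wsi[OF i] by simp
  next
    case False
    have "ws0 ! j \<bullet>c ws0 ! i = 0" using corthogonalD[OF ws0(2), of j i] len0 i j False by auto
    then show ?thesis using False wsi[OF i] wsi[OF j] ws0i(1)[OF i] ws0i(1)[OF j]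
      by (simp add: vec_normalize_def cscalar_smult_left[of _ n] cscalar_smult_right[of _ n])
  qed
  have "col (mat_of_cols n ws) 0 = ws ! 0"
    using \<open>n \<noteq> 0\<close> len carr by (intro col_mat_of_cols) auto
  also have "ws ! 0 = v"
    using hd0 \<open>n \<noteq> 0\<close> len0 wsi[of 0] vec_normalize_unit[OF v1] hd_conv_nth[of ws0] by auto
  finally show ?thesis
    using unitary_mat_of_cols[OF len carr orthonormal] by blast
qed

lemma adj_mult_mult_carrier_mat:
  "W \<in> carrier_mat n k \<Longrightarrow> A \<in> carrier_mat n n \<Longrightarrow> adj W * A * W \<in> carrier_mat k k"
  by (metis adj_carrier_mat mult_carrier_mat)

lemma adj_congruence:
  assumes W: "W \<in> carrier_mat n k" and A: "A \<in> carrier_mat n n"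
  shows "adj (adj W * A * W) = adj W * adj A * W"
  using adj_mult[OF mult_carrier_mat[OF adj_carrier_mat[OF W] A] W] adj_mult[OF adj_carrier_mat[OF W] A]
    assoc_mult_mat[OF adj_carrier_mat[OF W] adj_carrier_mat[OF A] W]
  by simp

lemma adj_four_block_diag:
  assumes "A \<in> carrier_mat k k" "D \<in> carrier_mat m m"
  shows "adj (four_block_mat A (0\<^sub>m k m) (0\<^sub>m m k) D) = four_block_mat (adj A) (0\<^sub>m k m) (0\<^sub>m m k) (adj D)"
  by (rule eq_matI) (use assms in auto)

lemma mult_four_block_diag:
  assumes A: "A \<in> carrier_mat k k" "A' \<in> carrier_mat k k" and D: "D \<in> carrier_mat m m" "D' \<in> carrier_mat m m"
  shows "four_block_mat A (0\<^sub>m k m) (0\<^sub>m m k) D * four_block_mat A' (0\<^sub>m k m) (0\<^sub>m m k) D' =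
    four_block_mat (A * A') (0\<^sub>m k m) (0\<^sub>m m k) (D * D')"
  using A D by (simp add: mult_four_block_mat[OF A(1) _ _ D(1) A(2) _ _ D(2)])

lemma unitary_four_block_diag:
  assumes U: "unitary k U" and V: "unitary m V"
  shows "unitary (k + m) (four_block_mat U (0\<^sub>m k m) (0\<^sub>m m k) V)"
proof (rule unitaryI)
  have Uc: "U \<in> carrier_mat k k" and Vc: "V \<in> carrier_mat m m"
    using U V by (auto simp: unitary_def)
  then show "four_block_mat U (0\<^sub>m k m) (0\<^sub>m m k) V \<in> carrier_mat (k + m) (k + m)"
    by simp
  show "adj (four_block_mat U (0\<^sub>m k m) (0\<^sub>m m k) V) * four_block_mat U (0\<^sub>m k m) (0\<^sub>m m k) V = 1\<^sub>m (k + m)"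
    using U V Uc Vc by (simp add: adj_four_block_diag mult_four_block_diag unitary_def)
qed

lemma unit_eigenvector_exists:
  fixes A :: "complex mat"
  assumes A: "A \<in> carrier_mat n n" and n: "0 < n"
  shows "\<exists>e v. v \<in> carrier_vec n \<and> v \<bullet>c v = 1 \<and> A *\<^sub>v v = e \<cdot>\<^sub>v v"
proof -
  obtain e where "eigenvalue A e"
    using spectrum_non_empty[OF A n] unfolding spectrum_def by auto
  then obtain v where v: "v \<in> carrier_vec n" "v \<noteq> 0\<^sub>v n" and Av: "A *\<^sub>v v = e \<cdot>\<^sub>v v"
    using A unfolding eigenvalue_def eigenvector_def by auto
  have "A *\<^sub>v vec_normalize v = e \<cdot>\<^sub>v vec_normalize v"
    unfolding vec_normalize_def mult_mat_vec[OF A v(1)] Av smult_smult_assoc by (simp add: mult.commute)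
  then show ?thesis using vec_normalize[OF v] by blast
qed

lemma adj_mult_mult_first_col:
  assumes W: "unitary n W" and A: "A \<in> carrier_mat n n" and Aw: "A *\<^sub>v col W 0 = e \<cdot>\<^sub>v col W 0"
    and n: "0 < n" and i: "i < n"
  shows "(adj W * A * W) $$ (i,0) = (if i = 0 then e else 0)"
proof -
  have Wc: "W \<in> carrier_mat n n" using W by (rule unitary_carrier_mat)
  have "(adj W * A * W) $$ (i,0) = (e \<cdot>\<^sub>v col W 0) \<bullet>c col W i"
    unfolding adj_mult_mult_index[OF Wc A Wc i n] Aw ..
  also have "\<dots> = e * (col W 0 \<bullet>c col W i)"
    by (rule cscalar_smult_left[OF col_carrier_vec[OF n Wc] col_carrier_vec[OF i Wc]])
  finally show ?thesis using unitary_cols_orthonormal[OF W i n] by auto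
qed

lemma hermitian_first_col_block:
  assumes C: "C \<in> carrier_mat (Suc m) (Suc m)" and herm: "adj C = C"
    and col0: "\<And>i. i < Suc m \<Longrightarrow> C $$ (i,0) = (if i = 0 then e else 0)"
  shows "\<exists>B. B \<in> carrier_mat m m \<and> adj B = B \<and> C = four_block_mat (mat 1 1 (\<lambda>_. e)) (0\<^sub>m 1 m) (0\<^sub>m m 1) B"
proof -
  have C_sym: "C $$ (i,j) = cnj (C $$ (j,i))" if "i < Suc m" "j < Suc m" for i j
    using arg_cong[OF herm, of "\<lambda>M. M $$ (i,j)"] C that by simp
  define B where "B = mat m m (\<lambda>(i,j). C $$ (Suc i, Suc j))"
  have B: "B \<in> carrier_mat m m" unfolding B_def by simp
  have hermB: "adj B = B"
    by (rule eq_matI) (use B in \<open>auto simp: B_def C_sym[symmetric]\<close>)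
  have "C = four_block_mat (mat 1 1 (\<lambda>_. e)) (0\<^sub>m 1 m) (0\<^sub>m m 1) B"
  proof (rule eq_matI)
    fix i j assume "i < dim_row (four_block_mat (mat 1 1 (\<lambda>_. e)) (0\<^sub>m 1 m) (0\<^sub>m m 1) B)"
      "j < dim_col (four_block_mat (mat 1 1 (\<lambda>_. e)) (0\<^sub>m 1 m) (0\<^sub>m m 1) B)"
    then have i: "i < Suc m" and j: "j < Suc m" using B by auto
    show "C $$ (i,j) = four_block_mat (mat 1 1 (\<lambda>_. e)) (0\<^sub>m 1 m) (0\<^sub>m m 1) B $$ (i,j)"
    proof (cases "i = 0 \<or> j = 0")
      case True
      then show ?thesis
        using B i j col0[OF i] col0[OF j] C_sym[OF i j] C_sym[of 0 0] by auto
    next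
      case False
      then obtain i' j' where "i = Suc i'" "j = Suc j'" by (cases i; cases j) auto
      then show ?thesis using i j B unfolding B_def by simp
    qed
  qed (use C B in auto)
  then show ?thesis using B hermB by blast
qed

lemma hermitian_deflation:
  assumes A: "A \<in> carrier_mat (Suc m) (Suc m)" and herm: "adj A = A"
  shows "\<exists>W e B. unitary (Suc m) W \<and> B \<in> carrier_mat m m \<and> adj B = B \<and>
    adj W * A * W = four_block_mat (mat 1 1 (\<lambda>_. e)) (0\<^sub>m 1 m) (0\<^sub>m m 1) B"
proof -
  obtain e v where v: "v \<in> carrier_vec (Suc m)" "v \<bullet>c v = 1" and Av: "A *\<^sub>v v = e \<cdot>\<^sub>v v"
    using unit_eigenvector_exists[OF A] by blast
  obtain W where W: "unitary (Suc m) W" and col0: "col W 0 = v"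
    using unitary_with_first_col[OF v] by blast
  have Wc: "W \<in> carrier_mat (Suc m) (Suc m)" using W by (rule unitary_carrier_mat)
  have hermC: "adj (adj W * A * W) = adj W * A * W"
    unfolding adj_congruence[OF Wc A] herm ..
  have "(adj W * A * W) $$ (i,0) = (if i = 0 then e else 0)" if "i < Suc m" for i
    using col0 Av that by (intro adj_mult_mult_first_col[OF W A]) simp_all
  then obtain B where "B \<in> carrier_mat m m" "adj B = B"
    "adj W * A * W = four_block_mat (mat 1 1 (\<lambda>_. e)) (0\<^sub>m 1 m) (0\<^sub>m m 1) B"
    using hermitian_first_col_block[OF adj_mult_mult_carrier_mat[OF Wc A] hermC] by blast
  then show ?thesis using W by blast
qed

lemma unitary_conjugate_back:
  assumes U: "unitary n U" and A: "A \<in> carrier_mat n n"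
  shows "U * (adj U * A * U) * adj U = A"
proof -
  have Uc: "U \<in> carrier_mat n n" using U by (rule unitary_carrier_mat)
  then have "U * (adj U * A * U) * adj U = (U * adj U) * A * (U * adj U)"
    using A by (simp add: mult_carrier_mat[of _ n n _ n] assoc_mult_mat[of _ n n _ n _ n])
  then show ?thesis using U A by (simp add: unitary_def)
qed

theorem hermitian_unitarily_diagonalizable:
  assumes "A \<in> carrier_mat n n" "adj A = A"
  shows "\<exists>U. unitary n U \<and> diagonal_mat (adj U * A * U)"
  using assms
proof (induction n arbitrary: A)
  case 0
  then have "diagonal_mat (adj (1\<^sub>m 0) * A * 1\<^sub>m 0)" by (auto simp: diagonal_mat_def)
  then show ?case using unitary_one by blast
next
  case (Suc m)
  obtain W e B where W: "unitary (Suc m) W" and B: "B \<in> carrier_mat m m" "adj B = B"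
    and deflate: "adj W * A * W = four_block_mat (mat 1 1 (\<lambda>_. e)) (0\<^sub>m 1 m) (0\<^sub>m m 1) B"
    using hermitian_deflation[OF Suc.prems] by blast
  obtain V where V: "unitary m V" and diagV: "diagonal_mat (adj V * B * V)"
    using Suc.IH[OF B] by blast
  define E where "E = mat 1 1 (\<lambda>_. e)"
  define V' where "V' = four_block_mat (1\<^sub>m 1) (0\<^sub>m 1 m) (0\<^sub>m m 1) V"
  have V': "unitary (Suc m) V'"
    using unitary_four_block_diag[OF unitary_one[of 1] V] unfolding V'_def by simp
  have Wc: "W \<in> carrier_mat (Suc m) (Suc m)" and V'c: "V' \<in> carrier_mat (Suc m) (Suc m)"
    and Vc: "V \<in> carrier_mat m m" and E: "E \<in> carrier_mat 1 1"
    using W V' V unfolding E_def by (auto simp: unitary_def)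
  have "adj (W * V') * A * (W * V') = adj V' * (adj W * A * W) * V'"
    using Wc V'c Suc.prems(1)
    by (simp add: adj_mult[OF Wc V'c] mult_carrier_mat[of _ "Suc m" "Suc m" _ "Suc m"]
        assoc_mult_mat[of _ "Suc m" "Suc m" _ "Suc m" _ "Suc m"])
  also have "\<dots> = four_block_mat E (0\<^sub>m 1 m) (0\<^sub>m m 1) (adj V * B * V)"
    unfolding deflate V'_def E_def[symmetric] using E Vc B
    by (simp add: adj_four_block_diag mult_four_block_diag mult_carrier_mat[of _ m m _ m])
  finally have "diagonal_mat (adj (W * V') * A * (W * V'))"
    using diagV E Vc B unfolding E_def by (auto simp: diagonal_mat_def)
  then show ?case using unitary_mult[OF W V'] by blast
qed

lemma unitary_diagonalization_eigenvector:
  assumes U: "unitary n U" and A: "A \<in> carrier_mat n n" and diag: "diagonal_mat (adj U * A * U)" and i: "i < n"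
  shows "A *\<^sub>v col U i = (adj U * A * U) $$ (i,i) \<cdot>\<^sub>v col U i"
proof -
  define D where "D = adj U * A * U"
  have Uc: "U \<in> carrier_mat n n" using U by (rule unitary_carrier_mat)
  have D: "D \<in> carrier_mat n n" unfolding D_def by (rule adj_mult_mult_carrier_mat[OF Uc A])
  have "U * D = (U * adj U) * A * U"
    unfolding D_def using Uc A
    by (simp add: mult_carrier_mat[of _ n n _ n] assoc_mult_mat[of _ n n _ n _ n])
  then have AU: "A * U = U * D" using U A by (simp add: unitary_def)
  have "col D i = D $$ (i,i) \<cdot>\<^sub>v unit_vec n i"
    using D diag i unfolding D_def[symmetric] by (intro eq_vecI) (auto simp: diagonal_mat_def)
  then have "col (U * D) i = D $$ (i,i) \<cdot>\<^sub>v (U *\<^sub>v unit_vec n i)"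
    unfolding col_mult2[OF Uc D i] using mult_mat_vec[OF Uc unit_vec_carrier] by simp
  also have "U *\<^sub>v unit_vec n i = col U i"
    using Uc i by (intro eq_vecI) auto
  finally have "col (U * D) i = D $$ (i,i) \<cdot>\<^sub>v col U i" .
  moreover have "col (A * U) i = A *\<^sub>v col U i" by (rule col_mult2[OF A Uc i])
  ultimately show ?thesis unfolding D_def[symmetric] AU by simp
qed

section \<open>The Hermitian positive definite square root\<close>

lemma hermitian_eigenvalue_real:
  assumes A: "A \<in> carrier_mat n n" "adj A = A"
    and x: "x \<in> carrier_vec n" "x \<noteq> 0\<^sub>v n" and Ax: "A *\<^sub>v x = \<mu> \<cdot>\<^sub>v x"
  shows "cnj \<mu> = \<mu>"
proof -
  have "(A *\<^sub>v x) \<bullet>c x = \<mu> * complex_of_real (Re (x \<bullet>c x))"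
    unfolding Ax cscalar_smult_left[OF x(1) x(1)] cscalar_self_real[of x, symmetric] ..
  with hermitian_quad_form_real[OF A x(1)] have "cnj \<mu> * complex_of_real (Re (x \<bullet>c x)) = \<mu> * complex_of_real (Re (x \<bullet>c x))"
    by (metis complex_cnj_complex_of_real complex_cnj_mult)
  then show ?thesis using cscalar_self_Re_pos[OF x] by simp
qed

lemma hermitian_eq_zero_if_eigenvalues_zero:
  assumes A: "A \<in> carrier_mat n n" "adj A = A" and eig: "\<And>\<mu>. eigenvalue A \<mu> \<Longrightarrow> \<mu> = 0"
  shows "A = 0\<^sub>m n n"
proof -
  obtain U where U: "unitary n U" and diag: "diagonal_mat (adj U * A * U)"
    using hermitian_unitarily_diagonalizable[OF A] by blast
  have Uc: "U \<in> carrier_mat n n" using U by (rule unitary_carrier_mat)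
  define D where "D = adj U * A * U"
  have D: "D \<in> carrier_mat n n" unfolding D_def by (rule adj_mult_mult_carrier_mat[OF Uc A(1)])
  have "D $$ (i,i) = 0" if i: "i < n" for i
  proof (rule eig)
    have "col U i \<bullet>c col U i = 1" using unitary_cols_orthonormal[OF U i i] by simp
    then have "col U i \<noteq> 0\<^sub>v n" using Uc i by auto
    moreover have "A *\<^sub>v col U i = D $$ (i,i) \<cdot>\<^sub>v col U i"
      unfolding D_def by (rule unitary_diagonalization_eigenvector[OF U A(1) diag i])
    ultimately show "eigenvalue A (D $$ (i,i))"
      unfolding eigenvalue_def eigenvector_def using Uc i A(1) by (intro exI[of _ "col U i"]) auto
  qed
  then have "D = 0\<^sub>m n n"
    using D diag unfolding D_def[symmetric] by (intro eq_matI) (auto simp: diagonal_mat_def)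
  then show ?thesis using unitary_conjugate_back[OF U A(1)] Uc unfolding D_def by simp
qed

definition diag_real :: "nat \<Rightarrow> (nat \<Rightarrow> real) \<Rightarrow> complex mat" where
  "diag_real n d = mat n n (\<lambda>(i,j). if i = j then complex_of_real (d i) else 0)"

lemma diag_real_carrier_mat: "diag_real n d \<in> carrier_mat n n"
  unfolding diag_real_def by simp

lemma diag_real_mult_vec:
  assumes y: "y \<in> carrier_vec n"
  shows "diag_real n d *\<^sub>v y = vec n (\<lambda>i. complex_of_real (d i) * y $ i)"
proof (rule eq_vecI)
  fix i assume "i < dim_vec (vec n (\<lambda>i. complex_of_real (d i) * y $ i))"
  then have i: "i < n" by simp
  have "(diag_real n d *\<^sub>v y) $ i = (\<Sum>k\<in>{0..<n}. (if i = k then complex_of_real (d i) else 0) * y $ k)"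
    using i y by (simp add: diag_real_def scalar_prod_def)
  also have "\<dots> = (\<Sum>k\<in>{0..<n}. if k = i then complex_of_real (d i) * y $ i else 0)"
    by (rule sum.cong) auto
  finally show "(diag_real n d *\<^sub>v y) $ i = vec n (\<lambda>i. complex_of_real (d i) * y $ i) $ i"
    using i by simp
qed (simp add: diag_real_def)

lemma diag_real_mult:
  "diag_real n d * diag_real n d' = diag_real n (\<lambda>i. d i * d' i)"
proof (rule eq_matI)
  fix i j assume "i < dim_row (diag_real n (\<lambda>i. d i * d' i))" "j < dim_col (diag_real n (\<lambda>i. d i * d' i))"
  then have i: "i < n" and j: "j < n" by (simp_all add: diag_real_def)
  have "(diag_real n d * diag_real n d') $$ (i,j) = (\<Sum>k\<in>{0..<n}. (if i = k then complex_of_real (d i) else 0) *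
      (if k = j then complex_of_real (d' k) else 0))"
    using i j by (simp add: diag_real_def scalar_prod_def)
  also have "\<dots> = (\<Sum>k\<in>{0..<n}. if k = i then (if i = j then complex_of_real (d i * d' i) else 0) else 0)"
    by (rule sum.cong) auto
  finally show "(diag_real n d * diag_real n d') $$ (i,j) = diag_real n (\<lambda>i. d i * d' i) $$ (i,j)"
    using i j by (simp add: diag_real_def)
qed (simp_all add: diag_real_def)

lemma hpd_diag_real:
  assumes d: "\<And>i. i < n \<Longrightarrow> 0 < d i"
  shows "hpd n (diag_real n d)"
proof -
  have "0 < Re ((diag_real n d *\<^sub>v y) \<bullet>c y)" if y: "y \<in> carrier_vec n" "y \<noteq> 0\<^sub>v n" for y
  proof -
    have "Re ((diag_real n d *\<^sub>v y) \<bullet>c y) = (\<Sum>i\<in>{0..<n}. d i * (cmod (y $ i))\<^sup>2)"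
      using y by (simp add: diag_real_mult_vec scalar_prod_def mult.assoc complex_norm_square[symmetric]
          del: of_real_power)
    also have "0 < \<dots>"
    proof -
      obtain k where k: "k < n" "y $ k \<noteq> 0"
        using y by (metis eq_vecI carrier_vecD index_zero_vec)
      show ?thesis using d k by (intro sum_pos2[of _ k]) (auto simp: less_imp_le)
    qed
    finally show ?thesis .
  qed
  moreover have "adj (diag_real n d) = diag_real n d"
    by (rule eq_matI) (auto simp: diag_real_def)
  ultimately show ?thesis using diag_real_carrier_mat unfolding hpd_def by blast
qed

lemma hermitian_diagonal_eq_diag_real:
  assumes D: "D \<in> carrier_mat n n" "adj D = D" and diag: "diagonal_mat D"
  shows "D = diag_real n (\<lambda>i. Re (D $$ (i,i)))"
proof (rule eq_matI)
  fix i j assume "i < dim_row (diag_real n (\<lambda>i. Re (D $$ (i,i))))" "j < dim_col (diag_real n (\<lambda>i. Re (D $$ (i,i))))"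
  then have i: "i < n" and j: "j < n" by (simp_all add: diag_real_def)
  have "cnj (D $$ (i,i)) = D $$ (i,i)"
    using arg_cong[OF D(2), of "\<lambda>M. M $$ (i,i)"] D(1) i by simp
  then show "D $$ (i,j) = diag_real n (\<lambda>i. Re (D $$ (i,i))) $$ (i,j)"
    using diag D(1) i j by (auto simp: diag_real_def diagonal_mat_def complex_eq_iff)
qed (use D in \<open>simp_all add: diag_real_def\<close>)

lemma hpd_unitary_congruence:
  assumes U: "unitary n U" and Q: "hpd n Q"
  shows "hpd n (U * Q * adj U)"
proof -
  have Uc: "U \<in> carrier_mat n n" and aUc: "adj U \<in> carrier_mat n n" using U by (auto simp: unitary_def)
  have Qc: "Q \<in> carrier_mat n n" and hermQ: "adj Q = Q"
    and posQ: "\<And>y. y \<in> carrier_vec n \<Longrightarrow> y \<noteq> 0\<^sub>v n \<Longrightarrow> 0 < Re ((Q *\<^sub>v y) \<bullet>c y)"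
    using Q unfolding hpd_def by auto
  have "0 < Re (((U * Q * adj U) *\<^sub>v x) \<bullet>c x)" if x: "x \<in> carrier_vec n" "x \<noteq> 0\<^sub>v n" for x
  proof -
    define y where "y = adj U *\<^sub>v x"
    have y: "y \<in> carrier_vec n" unfolding y_def using aUc x by simp
    have "U *\<^sub>v y = x" unfolding y_def using U mult_mat_vec_right_inverse[OF Uc aUc _ x(1)]
      by (simp add: unitary_def)
    then have "y \<noteq> 0\<^sub>v n" using Uc x by auto
    moreover have "(U * Q * adj U) *\<^sub>v x = U *\<^sub>v (Q *\<^sub>v y)"
      unfolding y_def using assoc_mult_mat_vec[OF mult_carrier_mat[OF Uc Qc] aUc x(1)]
        assoc_mult_mat_vec[OF Uc Qc mult_mat_vec_carrier[OF aUc x(1)]] by simp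
    then have "((U * Q * adj U) *\<^sub>v x) \<bullet>c x = (Q *\<^sub>v y) \<bullet>c y"
      using cscalar_adj[OF Uc mult_mat_vec_carrier[OF Qc y] x(1)] unfolding y_def by simp
    ultimately show ?thesis using posQ[OF y] by simp
  qed
  moreover have "adj (U * Q * adj U) = U * Q * adj U"
    using adj_congruence[OF aUc Qc] hermQ by simp
  ultimately show ?thesis using Uc Qc unfolding hpd_def by (auto intro!: mult_carrier_mat[of _ n n _ n])
qed

lemma hpd_sqrt_exists:
  assumes S: "hpd n S"
  shows "\<exists>R. hpd n R \<and> R * R = S"
proof -
  have Sc: "S \<in> carrier_mat n n" and herm: "adj S = S"
    and pos: "\<And>x. x \<in> carrier_vec n \<Longrightarrow> x \<noteq> 0\<^sub>v n \<Longrightarrow> 0 < Re ((S *\<^sub>v x) \<bullet>c x)"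
    using S unfolding hpd_def by auto
  obtain U where U: "unitary n U" and diag: "diagonal_mat (adj U * S * U)"
    using hermitian_unitarily_diagonalizable[OF Sc herm] by blast
  have Uc: "U \<in> carrier_mat n n" using U by (rule unitary_carrier_mat)
  define d where "d i = Re ((adj U * S * U) $$ (i,i))" for i
  have D: "adj U * S * U = diag_real n d"
    unfolding d_def using hermitian_diagonal_eq_diag_real[OF adj_mult_mult_carrier_mat[OF Uc Sc] _ diag]
    by (simp add: adj_congruence[OF Uc Sc] herm)
  have d_pos: "0 < d i" if i: "i < n" for i
  proof -
    have "col U i \<in> carrier_vec n" "col U i \<noteq> 0\<^sub>v n"
      using unitary_cols_orthonormal[OF U i i] Uc i by auto
    then show ?thesis using pos unfolding d_def adj_mult_mult_index[OF Uc Sc Uc i i] by blast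
  qed
  define Q where "Q = diag_real n (\<lambda>i. sqrt (d i))"
  have Q: "Q \<in> carrier_mat n n" unfolding Q_def by (rule diag_real_carrier_mat)
  have QQ: "Q * Q = adj U * S * U"
    unfolding Q_def D diag_real_mult using d_pos
    by (intro eq_matI) (auto simp: diag_real_def less_imp_le)
  define R where "R = U * Q * adj U"
  have "R * R = U * (Q * (adj U * U) * Q) * adj U"
    unfolding R_def using Uc Q by (simp add: mult_carrier_mat[of _ n n _ n] assoc_mult_mat[of _ n n _ n _ n])
  also have "\<dots> = U * (adj U * S * U) * adj U"
    using U Q unfolding QQ[symmetric] by (simp add: unitary_def)
  also have "\<dots> = S" by (rule unitary_conjugate_back[OF U Sc])
  finally have "R * R = S" .
  moreover have "hpd n R"
    unfolding R_def Q_def using hpd_unitary_congruence[OF U hpd_diag_real] d_pos by simp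
  ultimately show ?thesis by blast
qed

lemma square_eq_mult_vec_diff:
  fixes R1 R2 :: "complex mat"
  assumes R1: "R1 \<in> carrier_mat n n" and R2: "R2 \<in> carrier_mat n n" and sq: "R1 * R1 = R2 * R2"
    and x: "x \<in> carrier_vec n"
  shows "R1 *\<^sub>v ((R1 - R2) *\<^sub>v x) + (R1 - R2) *\<^sub>v (R2 *\<^sub>v x) = 0\<^sub>v n"
proof -
  define a b where "a = R1 *\<^sub>v x" and "b = R2 *\<^sub>v x"
  have a: "a \<in> carrier_vec n" and b: "b \<in> carrier_vec n" unfolding a_def b_def using R1 R2 x by auto
  have "R1 *\<^sub>v ((R1 - R2) *\<^sub>v x) + (R1 - R2) *\<^sub>v b = R1 *\<^sub>v a - R2 *\<^sub>v b"
    unfolding minus_mult_distrib_mat_vec[OF R1 R2 x] minus_mult_distrib_mat_vec[OF R1 R2 b]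
      a_def[symmetric] b_def[symmetric] mult_minus_distrib_mat_vec[OF R1 a b]
    using R1 R2 a b by (intro eq_vecI) auto
  also have "R1 *\<^sub>v a = R2 *\<^sub>v b"
    unfolding a_def b_def using sq R1 R2 x by (simp flip: assoc_mult_mat_vec)
  also have "R2 *\<^sub>v b - R2 *\<^sub>v b = 0\<^sub>v n"
    using R2 b by (intro eq_vecI) auto
  finally show ?thesis unfolding b_def .
qed

lemma hpd_square_eq_diff_eigenvalue_zero:
  assumes R1: "hpd n R1" and R2: "hpd n R2" and sq: "R1 * R1 = R2 * R2"
    and eig: "eigenvalue (R1 - R2) \<mu>"
  shows "\<mu> = 0"
proof -
  have R1c: "R1 \<in> carrier_mat n n" and herm1: "adj R1 = R1"
    and pos1: "\<And>x. x \<in> carrier_vec n \<Longrightarrow> x \<noteq> 0\<^sub>v n \<Longrightarrow> 0 < Re ((R1 *\<^sub>v x) \<bullet>c x)"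
    using R1 unfolding hpd_def by auto
  have R2c: "R2 \<in> carrier_mat n n" and herm2: "adj R2 = R2"
    and pos2: "\<And>x. x \<in> carrier_vec n \<Longrightarrow> x \<noteq> 0\<^sub>v n \<Longrightarrow> 0 < Re ((R2 *\<^sub>v x) \<bullet>c x)"
    using R2 unfolding hpd_def by auto
  define D where "D = R1 - R2"
  have Dc: "D \<in> carrier_mat n n" unfolding D_def using R2c by (rule minus_carrier_mat)
  have herm: "adj D = D" unfolding D_def adj_minus[OF R1c R2c] herm1 herm2 ..
  obtain x where x: "x \<in> carrier_vec n" "x \<noteq> 0\<^sub>v n" and Dx: "D *\<^sub>v x = \<mu> \<cdot>\<^sub>v x"
    using eig Dc unfolding D_def eigenvalue_def eigenvector_def by auto
  have real: "cnj \<mu> = \<mu>" by (rule hermitian_eigenvalue_real[OF Dc herm x Dx])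
  define a b where "a = R1 *\<^sub>v x" and "b = R2 *\<^sub>v x"
  have a: "a \<in> carrier_vec n" and b: "b \<in> carrier_vec n" unfolding a_def b_def using R1c R2c x by auto
  \<comment> \<open>\<open>\<langle>(R1 D + D R2) x, x\<rangle>\<close> is both \<open>0\<close> and \<open>\<mu> (\<langle>R1 x, x\<rangle> + \<langle>R2 x, x\<rangle>)\<close>\<close>
  have "(R1 *\<^sub>v (D *\<^sub>v x)) \<bullet>c x + (D *\<^sub>v b) \<bullet>c x = 0"
    using cscalar_add_left[OF mult_mat_vec_carrier[OF R1c mult_mat_vec_carrier[OF Dc x(1)]]
        mult_mat_vec_carrier[OF Dc b] x(1)] x square_eq_mult_vec_diff[OF R1c R2c sq x(1)]
    unfolding D_def b_def by simp
  moreover have "(R1 *\<^sub>v (D *\<^sub>v x)) \<bullet>c x = \<mu> * (a \<bullet>c x)"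
    using cscalar_adj[OF R1c mult_mat_vec_carrier[OF Dc x(1)] x(1)] cscalar_adj[OF R1c x(1) x(1)] x a
    unfolding herm1 Dx a_def by (simp add: cscalar_smult_left[of _ n])
  moreover have "(D *\<^sub>v b) \<bullet>c x = \<mu> * (b \<bullet>c x)"
    using cscalar_adj[OF Dc b x(1)] x b real unfolding herm Dx by (simp add: cscalar_smult_right[of _ n])
  ultimately have "\<mu> * (a \<bullet>c x + b \<bullet>c x) = 0" by (simp add: distrib_left)
  moreover have "a \<bullet>c x + b \<bullet>c x \<noteq> 0"
    using pos1[OF x] pos2[OF x] unfolding a_def b_def
    by (metis plus_complex.sel(1) zero_complex.sel(1) add_pos_pos less_irrefl)
  ultimately show "\<mu> = 0" by simp
qed

lemma hpd_sqrt_unique: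
  assumes R1: "hpd n R1" and R2: "hpd n R2" and sq: "R1 * R1 = R2 * R2"
  shows "R1 = R2"
proof -
  have R1c: "R1 \<in> carrier_mat n n" and R2c: "R2 \<in> carrier_mat n n" and herm: "adj (R1 - R2) = R1 - R2"
    using R1 R2 adj_minus[of R1 n n R2] unfolding hpd_def by auto
  have "R1 - R2 = 0\<^sub>m n n"
    using hermitian_eq_zero_if_eigenvalues_zero[OF minus_carrier_mat[OF R2c] herm]
      hpd_square_eq_diff_eigenvalue_zero[OF R1 R2 sq] by blast
  then have "R1 $$ (i,j) = R2 $$ (i,j)" if "i < n" "j < n" for i j
  proof -
    have "(R1 - R2) $$ (i,j) = 0" using \<open>R1 - R2 = 0\<^sub>m n n\<close> that by simp
    then show ?thesis using R2c that by simp
  qed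
  then show "R1 = R2" using R1c R2c by (intro eq_matI) auto
qed

lemma hpd_sqrt:
  assumes S: "hpd n S"
  shows "hpd n (hpd_sqrt S)" "hpd_sqrt S * hpd_sqrt S = S"
proof -
  have "dim_row S = n" using S unfolding hpd_def by auto
  obtain R where R: "hpd n R" "R * R = S" using hpd_sqrt_exists[OF S] by blast
  have "hpd_sqrt S = R"
    unfolding hpd_sqrt_def \<open>dim_row S = n\<close> by (rule the_equality) (use R hpd_sqrt_unique in auto)
  then show "hpd n (hpd_sqrt S)" "hpd_sqrt S * hpd_sqrt S = S" using R by auto
qed

section \<open>Positive definiteness and inverses\<close>

lemma pos_def_iff_Re_quad_form_pos:
  "pos_def n M \<longleftrightarrow> M \<in> carrier_mat n n \<and> (\<forall>x \<in> carrier_vec n. x \<noteq> 0\<^sub>v n \<longrightarrow> 0 < Re ((M *\<^sub>v x) \<bullet>c x))"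
proof (cases "M \<in> carrier_mat n n")
  case True
  have "adj (M + adj M) = M + adj M"
    using True by (simp add: adj_add[OF True adj_carrier_mat[OF True]] comm_add_mat[OF adj_carrier_mat[OF True] True])
  then show ?thesis
    using True Re_quad_form_herm_part[OF True] by (auto simp: pos_def_def hpd_def)
qed (simp add: pos_def_def)

lemma pos_def_Re_quad_form_pos:
  "pos_def n M \<Longrightarrow> x \<in> carrier_vec n \<Longrightarrow> x \<noteq> 0\<^sub>v n \<Longrightarrow> 0 < Re ((M *\<^sub>v x) \<bullet>c x)"
  unfolding pos_def_iff_Re_quad_form_pos by blast

lemma pos_semidef_Re_quad_form_nonneg:
  assumes "pos_semidef n P" "x \<in> carrier_vec n"
  shows "0 \<le> Re ((P *\<^sub>v x) \<bullet>c x)"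
  using assms Re_quad_form_herm_part[of P n x] by (auto simp: pos_semidef_def hpsd_def)

lemma hpd_imp_pos_def: "hpd n H \<Longrightarrow> pos_def n H"
  by (simp add: pos_def_iff_Re_quad_form_pos hpd_def)

lemma pos_def_add_pos_semidef:
  assumes A: "pos_def n A" and P: "pos_semidef n P"
  shows "pos_def n (A + P)"
proof -
  have Ac: "A \<in> carrier_mat n n" and Pc: "P \<in> carrier_mat n n"
    using A P by (auto simp: pos_def_def pos_semidef_def)
  have "0 < Re (((A + P) *\<^sub>v x) \<bullet>c x)" if x: "x \<in> carrier_vec n" "x \<noteq> 0\<^sub>v n" for x
  proof -
    have "((A + P) *\<^sub>v x) \<bullet>c x = (A *\<^sub>v x) \<bullet>c x + (P *\<^sub>v x) \<bullet>c x"
      unfolding add_mult_distrib_mat_vec[OF Ac Pc x(1)]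
      by (rule cscalar_add_left[OF mult_mat_vec_carrier[OF Ac x(1)] mult_mat_vec_carrier[OF Pc x(1)] x(1)])
    then show ?thesis
      using pos_def_Re_quad_form_pos[OF A x] pos_semidef_Re_quad_form_nonneg[OF P x(1)] by simp
  qed
  then show ?thesis using Ac Pc unfolding pos_def_iff_Re_quad_form_pos by simp
qed

lemma minv_eqI:
  assumes A: "A \<in> carrier_mat n n" and B: "B \<in> carrier_mat n n" and AB: "A * B = 1\<^sub>m n"
  shows "minv A = B"
proof -
  have BA: "B * A = 1\<^sub>m n" by (rule mat_mult_left_right_inverse[OF A B AB])
  have dim: "dim_row A = n" using A by simp
  show ?thesis unfolding minv_def dim
  proof (rule the_equality)
    show "B \<in> carrier_mat n n \<and> A * B = 1\<^sub>m n \<and> B * A = 1\<^sub>m n" using B AB BA by simp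
    fix C assume "C \<in> carrier_mat n n \<and> A * C = 1\<^sub>m n \<and> C * A = 1\<^sub>m n"
    then have C: "C \<in> carrier_mat n n" and CA: "C * A = 1\<^sub>m n" by auto
    have "C = C * (A * B)" using AB C by simp
    also have "\<dots> = (C * A) * B" by (rule assoc_mult_mat[OF C A B, symmetric])
    finally show "C = B" using CA B by simp
  qed
qed

lemma pos_def_minv:
  assumes M: "pos_def n M"
  shows "minv M \<in> carrier_mat n n" "M * minv M = 1\<^sub>m n" "minv M * M = 1\<^sub>m n"
proof -
  have Mc: "M \<in> carrier_mat n n" using M by (simp add: pos_def_def)
  have "det M \<noteq> 0"
  proof
    assume "det M = 0"
    then obtain v where v: "v \<in> carrier_vec n" "v \<noteq> 0\<^sub>v n" and "M *\<^sub>v v = 0\<^sub>v n"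
      using det_0_iff_vec_prod_zero[OF Mc] by blast
    then show False using pos_def_Re_quad_form_pos[OF M v] by simp
  qed
  from det_non_zero_imp_unit[OF Mc this, of undefined]
  obtain B where B: "B \<in> carrier_mat n n" "M * B = 1\<^sub>m n" "B * M = 1\<^sub>m n"
    unfolding Units_def ring_mat_def by auto
  then show "minv M \<in> carrier_mat n n" "M * minv M = 1\<^sub>m n" "minv M * M = 1\<^sub>m n"
    using minv_eqI[OF Mc B(1,2)] by auto
qed

lemma inv_sqrt:
  assumes \<Sigma>: "hpd n \<Sigma>"
  shows "inv_sqrt \<Sigma> \<in> carrier_mat n n" "hpd_sqrt \<Sigma> * inv_sqrt \<Sigma> = 1\<^sub>m n"
    "inv_sqrt \<Sigma> * hpd_sqrt \<Sigma> = 1\<^sub>m n" "minv \<Sigma> = inv_sqrt \<Sigma> * inv_sqrt \<Sigma>"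
proof -
  define R S where "R = hpd_sqrt \<Sigma>" and "S = inv_sqrt \<Sigma>"
  have R: "hpd n R" and RR: "R * R = \<Sigma>" using hpd_sqrt[OF \<Sigma>] unfolding R_def by auto
  have Rc: "R \<in> carrier_mat n n" using R by (simp add: hpd_def)
  show S: "S \<in> carrier_mat n n" "R * S = 1\<^sub>m n" "S * R = 1\<^sub>m n"
    using pos_def_minv[OF hpd_imp_pos_def[OF R]] unfolding S_def inv_sqrt_def R_def by auto
  have "\<Sigma> * (S * S) = R * (R * S) * S"
    unfolding RR[symmetric] using Rc S(1)
    by (simp add: mult_carrier_mat[of _ n n _ n] assoc_mult_mat[of _ n n _ n _ n])
  then show "minv \<Sigma> = S * S"
    using S Rc RR by (intro minv_eqI[of _ n]) auto
qed

section \<open>Convergence of the PPS iteration\<close>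

lemma inverse_sandwich_swap:
  fixes \<Sigma> T Y :: "complex mat"
  assumes \<Sigma>: "\<Sigma> \<in> carrier_mat n n" and T: "T \<in> carrier_mat n n" and Y: "Y \<in> carrier_mat n n"
    and \<Sigma>T: "\<Sigma> * T = 1\<^sub>m n" and T\<Sigma>: "T * \<Sigma> = 1\<^sub>m n" and w: "w \<in> carrier_vec n"
  shows "(\<Sigma> - Y) *\<^sub>v (T *\<^sub>v ((\<Sigma> + Y) *\<^sub>v w)) = (\<Sigma> + Y) *\<^sub>v (T *\<^sub>v ((\<Sigma> - Y) *\<^sub>v w))"
proof -
  note carrier = mult_mat_vec_carrier[of _ n n]
  note \<Sigma>T_vec = mult_mat_vec_right_inverse[OF \<Sigma> T \<Sigma>T] and T\<Sigma>_vec = mult_mat_vec_right_inverse[OF T \<Sigma> T\<Sigma>]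
  define a b c where "a = \<Sigma> *\<^sub>v w" and "b = Y *\<^sub>v w" and "c = Y *\<^sub>v (T *\<^sub>v (Y *\<^sub>v w))"
  have abc: "a \<in> carrier_vec n" "b \<in> carrier_vec n" "c \<in> carrier_vec n"
    unfolding a_def b_def c_def using \<Sigma> T Y w by (auto intro!: carrier)
  have "(\<Sigma> - Y) *\<^sub>v (T *\<^sub>v ((\<Sigma> + Y) *\<^sub>v w)) = (a + b) - (b + c)"
    unfolding a_def b_def c_def using \<Sigma> T Y w
    by (simp add: carrier add_mult_distrib_mat_vec[of _ n n] minus_mult_distrib_mat_vec[of _ n n]
        mult_add_distrib_mat_vec[of _ n n] \<Sigma>T_vec T\<Sigma>_vec)
  moreover have "(\<Sigma> + Y) *\<^sub>v (T *\<^sub>v ((\<Sigma> - Y) *\<^sub>v w)) = (a - b) + (b - c)"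
    unfolding a_def b_def c_def using \<Sigma> T Y w
    by (simp add: carrier add_mult_distrib_mat_vec[of _ n n] minus_mult_distrib_mat_vec[of _ n n]
        mult_minus_distrib_mat_vec[of _ n n] \<Sigma>T_vec T\<Sigma>_vec)
      (rule eq_vecI; use \<Sigma> Y w abc in \<open>auto simp: a_def b_def c_def\<close>)
  moreover have "(a + b) - (b + c) = (a - b) + (b - c)"
    using abc by (intro eq_vecI) auto
  ultimately show ?thesis by simp
qed

lemma Gamma_PPS_eigenvector_relation:
  fixes \<Sigma> P1 P2 :: "complex mat"
  assumes \<Sigma>: "pos_def n \<Sigma>" and \<Sigma>P1: "pos_def n (\<Sigma> + P1)" and \<Sigma>P2: "pos_def n (\<Sigma> + P2)"
    and P1: "P1 \<in> carrier_mat n n" and P2: "P2 \<in> carrier_mat n n"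
    and v: "v \<in> carrier_vec n" and eig: "Gamma_PPS \<Sigma> P1 P2 *\<^sub>v v = \<mu> \<cdot>\<^sub>v v"
  shows "(\<Sigma> - P2) *\<^sub>v (minv \<Sigma> *\<^sub>v ((\<Sigma> - P1) *\<^sub>v v)) =
    \<mu> \<cdot>\<^sub>v ((\<Sigma> + P2) *\<^sub>v (minv \<Sigma> *\<^sub>v ((\<Sigma> + P1) *\<^sub>v v)))"
proof -
  note carrier = mult_mat_vec_carrier[of _ n n]
  have \<Sigma>c: "\<Sigma> \<in> carrier_mat n n" using \<Sigma> by (simp add: pos_def_def)
  have plus1: "\<Sigma> + P1 \<in> carrier_mat n n" and plus2: "\<Sigma> + P2 \<in> carrier_mat n n"
    and minus1: "\<Sigma> - P1 \<in> carrier_mat n n" and minus2: "\<Sigma> - P2 \<in> carrier_mat n n"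
    using \<Sigma>c P1 P2 by auto
  note inv = pos_def_minv[OF \<Sigma>] and inv1 = pos_def_minv[OF \<Sigma>P1] and inv2 = pos_def_minv[OF \<Sigma>P2]
  \<comment> \<open>the half-step iterate of the PPS method started from \<open>v\<close>\<close>
  define u where "u = minv (\<Sigma> + P2) *\<^sub>v ((\<Sigma> - P1) *\<^sub>v v)"
  have u: "u \<in> carrier_vec n" unfolding u_def using inv2(1) minus1 v by (auto intro!: carrier)
  have plus_u: "(\<Sigma> + P2) *\<^sub>v u = (\<Sigma> - P1) *\<^sub>v v"
    unfolding u_def using minus1 v by (intro mult_mat_vec_right_inverse[OF plus2 inv2(1,2)]) simp
  have "minv (\<Sigma> + P1) *\<^sub>v ((\<Sigma> - P2) *\<^sub>v u) = \<mu> \<cdot>\<^sub>v v"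
    using eig inv1(1) inv2(1) minus1 minus2 v
    unfolding u_def Gamma_PPS_def
    by (simp add: carrier mult_carrier_mat[of _ n n _ n] assoc_mult_mat_vec[of _ n n _ n])
  then have "(\<Sigma> + P1) *\<^sub>v (minv (\<Sigma> + P1) *\<^sub>v ((\<Sigma> - P2) *\<^sub>v u)) = \<mu> \<cdot>\<^sub>v ((\<Sigma> + P1) *\<^sub>v v)"
    using plus1 v by (simp add: mult_mat_vec)
  then have minus_u: "(\<Sigma> - P2) *\<^sub>v u = \<mu> \<cdot>\<^sub>v ((\<Sigma> + P1) *\<^sub>v v)"
    using mult_mat_vec_right_inverse[OF plus1 inv1(1,2)] minus2 u by simp
  have "(\<Sigma> - P2) *\<^sub>v (minv \<Sigma> *\<^sub>v ((\<Sigma> - P1) *\<^sub>v v)) = (\<Sigma> + P2) *\<^sub>v (minv \<Sigma> *\<^sub>v ((\<Sigma> - P2) *\<^sub>v u))"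
    unfolding plus_u[symmetric] by (rule inverse_sandwich_swap[OF \<Sigma>c inv(1) P2 inv(2,3) u])
  also have "\<dots> = \<mu> \<cdot>\<^sub>v ((\<Sigma> + P2) *\<^sub>v (minv \<Sigma> *\<^sub>v ((\<Sigma> + P1) *\<^sub>v v)))"
    unfolding minus_u using plus1 plus2 inv(1) v by (simp add: carrier mult_mat_vec)
  finally show ?thesis .
qed

lemma Re_cscalar_sum_minus_diff:
  fixes y z :: "complex vec"
  assumes y: "y \<in> carrier_vec n" and z: "z \<in> carrier_vec n"
  shows "Re ((z + y) \<bullet>c (z + y)) - Re ((z - y) \<bullet>c (z - y)) = 4 * Re (y \<bullet>c z)"
proof -
  have "(z + y) \<bullet>c (z + y) - (z - y) \<bullet>c (z - y) =
    (\<Sum>i\<in>{0..<n}. (z $ i + y $ i) * cnj (z $ i + y $ i) - (z $ i - y $ i) * cnj (z $ i - y $ i))"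
    using z y by (simp add: scalar_prod_def sum_subtractf)
  also have "\<dots> = (\<Sum>i\<in>{0..<n}. 2 * (y $ i * cnj (z $ i)) + 2 * (z $ i * cnj (y $ i)))"
    by (rule sum.cong) (simp_all add: algebra_simps)
  also have "\<dots> = 2 * (y \<bullet>c z) + 2 * (z \<bullet>c y)"
    using z y by (simp add: scalar_prod_def sum.distrib sum_distrib_left)
  also have "z \<bullet>c y = cnj (y \<bullet>c z)"
    by (rule cscalar_commute[OF z y])
  finally have "Re ((z + y) \<bullet>c (z + y) - (z - y) \<bullet>c (z - y)) =
      Re (2 * (y \<bullet>c z) + 2 * cnj (y \<bullet>c z))"
    by (rule arg_cong)
  then show ?thesis by simp
qed

lemma cmod_less_1_of_cayley_relation:
  fixes y z :: "complex vec"
  assumes y: "y \<in> carrier_vec n" and z: "z \<in> carrier_vec n"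
    and rel: "z - y = \<mu> \<cdot>\<^sub>v (z + y)" and pos: "0 < Re (y \<bullet>c z)"
  shows "cmod \<mu> < 1"
proof -
  define a where "a = z + y"
  have a: "a \<in> carrier_vec n" unfolding a_def using y z by simp
  have "Re (a \<bullet>c a) - Re ((\<mu> \<cdot>\<^sub>v a) \<bullet>c (\<mu> \<cdot>\<^sub>v a)) = 4 * Re (y \<bullet>c z)"
    using Re_cscalar_sum_minus_diff[OF y z] unfolding a_def rel .
  also have "(\<mu> \<cdot>\<^sub>v a) \<bullet>c (\<mu> \<cdot>\<^sub>v a) = \<mu> * cnj \<mu> * (a \<bullet>c a)"
    using a by (simp add: cscalar_smult_left[of _ n] cscalar_smult_right[of _ n])
  also have "\<mu> * cnj \<mu> = complex_of_real ((cmod \<mu>)\<^sup>2)"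
    by (rule complex_norm_square[symmetric])
  finally have "(1 - (cmod \<mu>)\<^sup>2) * Re (a \<bullet>c a) = 4 * Re (y \<bullet>c z)"
    by (simp add: algebra_simps)
  with pos have "0 < (1 - (cmod \<mu>)\<^sup>2) * Re (a \<bullet>c a)" by simp
  moreover have "0 \<le> Re (a \<bullet>c a)"
    using conjugate_square_ge_0_vec[of a] by (simp add: less_eq_complex_def)
  ultimately have "(cmod \<mu>)\<^sup>2 < 1\<^sup>2" by (simp add: zero_less_mult_iff)
  then show ?thesis by (rule power_less_imp_less_base) simp
qed

lemma normalized_PPS_factors:
  fixes Q1 Q2 :: "complex mat"
  assumes Q1: "Q1 \<in> carrier_mat n n" and Q2: "Q2 \<in> carrier_mat n n" and x: "x \<in> carrier_vec n"
  shows "(1\<^sub>m n + Q2) *\<^sub>v ((1\<^sub>m n + Q1) *\<^sub>v x) = (x + Q2 *\<^sub>v (Q1 *\<^sub>v x)) + (Q1 *\<^sub>v x + Q2 *\<^sub>v x)"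
    and "(1\<^sub>m n - Q2) *\<^sub>v ((1\<^sub>m n - Q1) *\<^sub>v x) = (x + Q2 *\<^sub>v (Q1 *\<^sub>v x)) - (Q1 *\<^sub>v x + Q2 *\<^sub>v x)"
proof -
  note carrier = mult_mat_vec_carrier[of _ n n]
  show "(1\<^sub>m n + Q2) *\<^sub>v ((1\<^sub>m n + Q1) *\<^sub>v x) = (x + Q2 *\<^sub>v (Q1 *\<^sub>v x)) + (Q1 *\<^sub>v x + Q2 *\<^sub>v x)"
    using Q1 Q2 x
    by (simp add: carrier add_mult_distrib_mat_vec[of _ n n] mult_add_distrib_mat_vec[of _ n n])
      (rule eq_vecI; use Q1 Q2 x in \<open>auto intro!: carrier\<close>)
  show "(1\<^sub>m n - Q2) *\<^sub>v ((1\<^sub>m n - Q1) *\<^sub>v x) = (x + Q2 *\<^sub>v (Q1 *\<^sub>v x)) - (Q1 *\<^sub>v x + Q2 *\<^sub>v x)"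
    using Q1 Q2 x
    by (simp add: carrier minus_mult_distrib_mat_vec[of _ n n] mult_minus_distrib_mat_vec[of _ n n])
      (rule eq_vecI; use Q1 Q2 x in \<open>auto intro!: carrier\<close>)
qed

lemma normalized_PPS_quad_form:
  fixes Q1 Q2 :: "complex mat"
  assumes Q1: "Q1 \<in> carrier_mat n n" and Q2: "Q2 \<in> carrier_mat n n" and x: "x \<in> carrier_vec n"
  shows "(((Q1 + Q2) + adj Q1 * adj Q2 * (Q1 + Q2)) *\<^sub>v x) \<bullet>c x =
    (Q1 *\<^sub>v x + Q2 *\<^sub>v x) \<bullet>c (x + Q2 *\<^sub>v (Q1 *\<^sub>v x))"
proof -
  note carrier = mult_mat_vec_carrier[of _ n n]
  define y where "y = Q1 *\<^sub>v x + Q2 *\<^sub>v x"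
  have y: "y \<in> carrier_vec n" unfolding y_def using Q1 Q2 x by (auto intro!: carrier)
  have aQ1: "adj Q1 \<in> carrier_mat n n" and aQ2: "adj Q2 \<in> carrier_mat n n" using Q1 Q2 by auto
  have Ac: "Q1 + Q2 \<in> carrier_mat n n" using Q1 Q2 by simp
  have Ax: "(Q1 + Q2) *\<^sub>v x = y"
    unfolding y_def by (rule add_mult_distrib_mat_vec[OF Q1 Q2 x])
  have "((Q1 + Q2) + adj Q1 * adj Q2 * (Q1 + Q2)) *\<^sub>v x =
      (Q1 + Q2) *\<^sub>v x + (adj Q1 * adj Q2 * (Q1 + Q2)) *\<^sub>v x"
    using Ac aQ1 aQ2 x by (intro add_mult_distrib_mat_vec[of _ n n]) auto
  also have "\<dots> = y + adj Q1 *\<^sub>v (adj Q2 *\<^sub>v y)"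
    unfolding assoc_mult_mat_vec[OF mult_carrier_mat[OF aQ1 aQ2] Ac x] Ax assoc_mult_mat_vec[OF aQ1 aQ2 y] ..
  also have "(y + adj Q1 *\<^sub>v (adj Q2 *\<^sub>v y)) \<bullet>c x = y \<bullet>c x + (adj Q2 *\<^sub>v y) \<bullet>c (Q1 *\<^sub>v x)"
    using cscalar_add_left[OF y carrier[OF aQ1 carrier[OF aQ2 y]] x]
      cscalar_adj[OF aQ1 carrier[OF aQ2 y] x] by simp
  also have "(adj Q2 *\<^sub>v y) \<bullet>c (Q1 *\<^sub>v x) = y \<bullet>c (Q2 *\<^sub>v (Q1 *\<^sub>v x))"
    using cscalar_adj[OF aQ2 y carrier[OF Q1 x]] by simp
  also have "y \<bullet>c x + y \<bullet>c (Q2 *\<^sub>v (Q1 *\<^sub>v x)) = y \<bullet>c (x + Q2 *\<^sub>v (Q1 *\<^sub>v x))"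
    by (rule cscalar_add_right[OF y x carrier[OF Q2 carrier[OF Q1 x]], symmetric])
  finally show ?thesis unfolding y_def .
qed

lemma cmod_less_1_of_normalized_PPS_eigenvector:
  fixes Q1 Q2 :: "complex mat"
  assumes Q1: "Q1 \<in> carrier_mat n n" and Q2: "Q2 \<in> carrier_mat n n"
    and K: "pos_def n ((Q1 + Q2) + adj Q1 * adj Q2 * (Q1 + Q2))"
    and x: "x \<in> carrier_vec n" "x \<noteq> 0\<^sub>v n"
    and eig: "(1\<^sub>m n - Q2) *\<^sub>v ((1\<^sub>m n - Q1) *\<^sub>v x) = \<mu> \<cdot>\<^sub>v ((1\<^sub>m n + Q2) *\<^sub>v ((1\<^sub>m n + Q1) *\<^sub>v x))"
  shows "cmod \<mu> < 1"
proof (rule cmod_less_1_of_cayley_relation)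
  show "Q1 *\<^sub>v x + Q2 *\<^sub>v x \<in> carrier_vec n" "x + Q2 *\<^sub>v (Q1 *\<^sub>v x) \<in> carrier_vec n"
    using Q1 Q2 x by auto
  show "(x + Q2 *\<^sub>v (Q1 *\<^sub>v x)) - (Q1 *\<^sub>v x + Q2 *\<^sub>v x) =
      \<mu> \<cdot>\<^sub>v ((x + Q2 *\<^sub>v (Q1 *\<^sub>v x)) + (Q1 *\<^sub>v x + Q2 *\<^sub>v x))"
    using eig unfolding normalized_PPS_factors[OF Q1 Q2 x(1)] .
  show "0 < Re ((Q1 *\<^sub>v x + Q2 *\<^sub>v x) \<bullet>c (x + Q2 *\<^sub>v (Q1 *\<^sub>v x)))"
    using pos_def_Re_quad_form_pos[OF K x] unfolding normalized_PPS_quad_form[OF Q1 Q2 x(1)] .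
qed

lemma congruence_square_plus_minus:
  fixes R S P :: "complex mat"
  assumes R: "R \<in> carrier_mat n n" and S: "S \<in> carrier_mat n n" and P: "P \<in> carrier_mat n n"
    and SR: "S * R = 1\<^sub>m n" and RS: "R * S = 1\<^sub>m n"
  shows "S * (R * R + P) * S = 1\<^sub>m n + S * P * S" "S * (R * R - P) * S = 1\<^sub>m n - S * P * S"
proof -
  note simps = mult_carrier_mat[of _ n n _ n] assoc_mult_mat[of _ n n _ n _ n]
    add_mult_distrib_mat[of _ n n _ _ n] mult_add_distrib_mat[of _ n n _ n]
    minus_mult_distrib_mat[of _ n n _ _ n] mult_minus_distrib_mat[of _ n n _ n]
  have "S * (R * R) * S = (S * R) * (R * S)" using R S by (simp add: simps)
  then have SRRS: "S * (R * R) * S = 1\<^sub>m n" using SR RS by simp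
  have "S * (R * R + P) * S = S * (R * R) * S + S * P * S"
    and "S * (R * R - P) * S = S * (R * R) * S - S * P * S"
    using R S P by (simp_all add: simps)
  then show "S * (R * R + P) * S = 1\<^sub>m n + S * P * S" "S * (R * R - P) * S = 1\<^sub>m n - S * P * S"
    unfolding SRRS .
qed

lemma sandwich_split_congruence:
  fixes R S X1 X2 :: "complex mat"
  assumes R: "R \<in> carrier_mat n n" and S: "S \<in> carrier_mat n n" and SR: "S * R = 1\<^sub>m n"
    and X1: "X1 \<in> carrier_mat n n" and X2: "X2 \<in> carrier_mat n n" and v: "v \<in> carrier_vec n"
  shows "S *\<^sub>v (X2 *\<^sub>v ((S * S) *\<^sub>v (X1 *\<^sub>v v))) = (S * X2 * S) *\<^sub>v ((S * X1 * S) *\<^sub>v (R *\<^sub>v v))"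
  using R S X1 X2 v mult_mat_vec_right_inverse[OF S R SR v]
  by (simp add: mult_carrier_mat[of _ n n _ n] assoc_mult_mat_vec[of _ n n _ n] mult_mat_vec_carrier[of _ n n])

lemma inv_sqrt_sandwich:
  fixes \<Sigma> P1 P2 :: "complex mat"
  assumes \<Sigma>: "hpd n \<Sigma>" and P1: "P1 \<in> carrier_mat n n" and P2: "P2 \<in> carrier_mat n n"
    and v: "v \<in> carrier_vec n"
  defines "S \<equiv> inv_sqrt \<Sigma>"
  shows "S *\<^sub>v ((\<Sigma> + P2) *\<^sub>v (minv \<Sigma> *\<^sub>v ((\<Sigma> + P1) *\<^sub>v v))) =
      (1\<^sub>m n + S * P2 * S) *\<^sub>v ((1\<^sub>m n + S * P1 * S) *\<^sub>v (hpd_sqrt \<Sigma> *\<^sub>v v))"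
    and "S *\<^sub>v ((\<Sigma> - P2) *\<^sub>v (minv \<Sigma> *\<^sub>v ((\<Sigma> - P1) *\<^sub>v v))) =
      (1\<^sub>m n - S * P2 * S) *\<^sub>v ((1\<^sub>m n - S * P1 * S) *\<^sub>v (hpd_sqrt \<Sigma> *\<^sub>v v))"
proof -
  note S = inv_sqrt[OF \<Sigma>, folded S_def]
  have R: "hpd_sqrt \<Sigma> \<in> carrier_mat n n" and RR: "hpd_sqrt \<Sigma> * hpd_sqrt \<Sigma> = \<Sigma>"
    using hpd_sqrt[OF \<Sigma>] by (auto simp: hpd_def)
  show "S *\<^sub>v ((\<Sigma> + P2) *\<^sub>v (minv \<Sigma> *\<^sub>v ((\<Sigma> + P1) *\<^sub>v v))) =
      (1\<^sub>m n + S * P2 * S) *\<^sub>v ((1\<^sub>m n + S * P1 * S) *\<^sub>v (hpd_sqrt \<Sigma> *\<^sub>v v))"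
    unfolding S(4) sandwich_split_congruence[OF R S(1,3) add_carrier_mat[OF P1] add_carrier_mat[OF P2] v]
      congruence_square_plus_minus(1)[OF R S(1) P1 S(3,2), unfolded RR]
      congruence_square_plus_minus(1)[OF R S(1) P2 S(3,2), unfolded RR] ..
  show "S *\<^sub>v ((\<Sigma> - P2) *\<^sub>v (minv \<Sigma> *\<^sub>v ((\<Sigma> - P1) *\<^sub>v v))) =
      (1\<^sub>m n - S * P2 * S) *\<^sub>v ((1\<^sub>m n - S * P1 * S) *\<^sub>v (hpd_sqrt \<Sigma> *\<^sub>v v))"
    unfolding S(4) sandwich_split_congruence[OF R S(1,3) minus_carrier_mat[OF P1] minus_carrier_mat[OF P2] v]
      congruence_square_plus_minus(2)[OF R S(1) P1 S(3,2), unfolded RR]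
      congruence_square_plus_minus(2)[OF R S(1) P2 S(3,2), unfolded RR] ..
qed

lemma Gamma_PPS_carrier_mat:
  assumes "hpd n \<Sigma>" "pos_semidef n P1" "pos_semidef n P2"
  shows "Gamma_PPS \<Sigma> P1 P2 \<in> carrier_mat n n"
  using pos_def_minv(1)[OF pos_def_add_pos_semidef[OF hpd_imp_pos_def]] assms
  unfolding Gamma_PPS_def hpd_def pos_semidef_def by (auto intro!: mult_carrier_mat[of _ n n _ n])

lemma Gamma_PPS_eigenvalue_normalized:
  fixes \<Sigma> P1 P2 :: "complex mat"
  assumes \<Sigma>: "hpd n \<Sigma>" and P1: "pos_semidef n P1" and P2: "pos_semidef n P2"
    and eig: "eigenvalue (Gamma_PPS \<Sigma> P1 P2) \<mu>"
  defines "Q1 \<equiv> inv_sqrt \<Sigma> * P1 * inv_sqrt \<Sigma>" and "Q2 \<equiv> inv_sqrt \<Sigma> * P2 * inv_sqrt \<Sigma>"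
  shows "\<exists>x \<in> carrier_vec n. x \<noteq> 0\<^sub>v n \<and>
    (1\<^sub>m n - Q2) *\<^sub>v ((1\<^sub>m n - Q1) *\<^sub>v x) = \<mu> \<cdot>\<^sub>v ((1\<^sub>m n + Q2) *\<^sub>v ((1\<^sub>m n + Q1) *\<^sub>v x))"
proof -
  have P1c: "P1 \<in> carrier_mat n n" and P2c: "P2 \<in> carrier_mat n n"
    using P1 P2 by (simp_all add: pos_semidef_def)
  obtain v where v: "v \<in> carrier_vec n" "v \<noteq> 0\<^sub>v n" and Gv: "Gamma_PPS \<Sigma> P1 P2 *\<^sub>v v = \<mu> \<cdot>\<^sub>v v"
    using eig Gamma_PPS_carrier_mat[OF \<Sigma> P1 P2] unfolding eigenvalue_def eigenvector_def by auto
  have "(\<Sigma> - P2) *\<^sub>v (minv \<Sigma> *\<^sub>v ((\<Sigma> - P1) *\<^sub>v v)) =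
      \<mu> \<cdot>\<^sub>v ((\<Sigma> + P2) *\<^sub>v (minv \<Sigma> *\<^sub>v ((\<Sigma> + P1) *\<^sub>v v)))"
    using hpd_imp_pos_def[OF \<Sigma>] pos_def_add_pos_semidef[OF hpd_imp_pos_def[OF \<Sigma>]] P1 P2 P1c P2c v(1) Gv
    by (intro Gamma_PPS_eigenvector_relation) auto
  then have "inv_sqrt \<Sigma> *\<^sub>v ((\<Sigma> - P2) *\<^sub>v (minv \<Sigma> *\<^sub>v ((\<Sigma> - P1) *\<^sub>v v))) =
      \<mu> \<cdot>\<^sub>v (inv_sqrt \<Sigma> *\<^sub>v ((\<Sigma> + P2) *\<^sub>v (minv \<Sigma> *\<^sub>v ((\<Sigma> + P1) *\<^sub>v v))))"
    using inv_sqrt[OF \<Sigma>] \<Sigma> P1c P2c v(1)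
    by (simp add: mult_mat_vec hpd_def mult_mat_vec_carrier[of _ n n])
  moreover have "hpd_sqrt \<Sigma> *\<^sub>v v \<noteq> 0\<^sub>v n"
    using pos_def_Re_quad_form_pos[OF hpd_imp_pos_def[OF hpd_sqrt(1)[OF \<Sigma>]] v] v(1) by auto
  ultimately show ?thesis
    unfolding inv_sqrt_sandwich[OF \<Sigma> P1c P2c v(1)] Q1_def Q2_def
    using hpd_sqrt(1)[OF \<Sigma>] v(1) by (auto simp: hpd_def)
qed

theorem corollary3p5:
  fixes n :: nat and A P1 P2 \<Sigma> :: "complex mat"
  assumes n: "0 < n"
    and A: "A \<in> carrier_mat n n" and A_nonsing: "invertible_mat A"
    and split: "A = P1 + P2"
    and P1: "pos_semidef n P1" and P2: "pos_semidef n P2"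
    and Sigma: "hpd n \<Sigma>"
    and K_pd: "let S = inv_sqrt \<Sigma>;
                   At = S * A * S; P1t = S * P1 * S; P2t = S * P2 * S
               in pos_def n (At + adj P1t * adj P2t * At)"
  shows "spectral_radius (Gamma_PPS \<Sigma> P1 P2) < 1"
proof -
  define S Q1 Q2 where "S = inv_sqrt \<Sigma>" and "Q1 = S * P1 * S" and "Q2 = S * P2 * S"
  have P1c: "P1 \<in> carrier_mat n n" and P2c: "P2 \<in> carrier_mat n n"
    using P1 P2 by (simp_all add: pos_semidef_def)
  have S: "S \<in> carrier_mat n n" unfolding S_def by (rule inv_sqrt(1)[OF Sigma])
  have "S * A * S = Q1 + Q2"
    unfolding split Q1_def Q2_def using S P1c P2c
    by (simp add: mult_add_distrib_mat[of _ n n _ n] add_mult_distrib_mat[of _ n n _ _ n] mult_carrier_mat[of _ n n _ n])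
  then have K: "pos_def n ((Q1 + Q2) + adj Q1 * adj Q2 * (Q1 + Q2))"
    using K_pd unfolding Let_def S_def[symmetric] Q1_def[symmetric] Q2_def[symmetric] by simp
  obtain \<mu> where "eigenvalue (Gamma_PPS \<Sigma> P1 P2) \<mu>" and \<rho>: "spectral_radius (Gamma_PPS \<Sigma> P1 P2) = cmod \<mu>"
    using spectral_radius_mem_max(1)[OF Gamma_PPS_carrier_mat[OF Sigma P1 P2] n] unfolding spectrum_def by auto
  then obtain x where "x \<in> carrier_vec n" "x \<noteq> 0\<^sub>v n"
    and "(1\<^sub>m n - Q2) *\<^sub>v ((1\<^sub>m n - Q1) *\<^sub>v x) = \<mu> \<cdot>\<^sub>v ((1\<^sub>m n + Q2) *\<^sub>v ((1\<^sub>m n + Q1) *\<^sub>v x))"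
    using Gamma_PPS_eigenvalue_normalized[OF Sigma P1 P2] unfolding Q1_def Q2_def S_def by blast
  then have "cmod \<mu> < 1"
    using cmod_less_1_of_normalized_PPS_eigenvector[OF _ _ K] S P1c P2c unfolding Q1_def Q2_def
    by (simp add: mult_carrier_mat[of _ n n _ n])
  then show ?thesis unfolding \<rho> .
qed

end
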